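(* For any integers $k,l\geq 1$, the equation $$[[x_{k+1},\dots,x_{k+l}],[x_1,\dots,x_k]]=\beta_{k+l}({\sf Sum}(\Phi_{k,l}C_{l,k}))$$ holds in $\mathbb Z\langle x_1,\dots,x_{k+l}\rangle$, where $\Phi_{k,l}C_{l,k}=\{\Phi_{k,l}\circ\tau\mid\tau\in C_{l,k}\}$.
   Context: $\mathbb Z\langle x_1,\dots,x_m\rangle$ is the free associative ring on $x_1,\dots,x_m$, with bracket $[u,v]=uv-vu$ and left-normed brackets $[u_1,\dots,u_r]=[[u_1,\dots,u_{r-1}],u_r]$. $S_m$ is the symmetric group on $\{1,\dots,m\}$. $\gamma_m$ is the additive subgroup spanned by the monomials $x_{\sigma(1)}\cdots x_{\sigma(m)}$, $\sigma\in S_m$; $\beta_m:\gamma_m\to\gamma_m$ is the homomorphism with $\beta_m(x_{\sigma(1)}\cdots x_{\sigma(m)})=[x_{\sigma(1)},\dots,x_{\sigma(m)}]$; for $T\subseteq S_m$, ${\sf Sum}(T)=\sum_{\sigma\in T}x_{\sigma(1)}\cdots x_{\sigma(m)}$. An $(s,t)$-shuffle is a pair $(\alpha,\beta)$ of strictly increasing maps $\alpha:\{1,\dots,s\}\to\{1,\dots,s+t\}$, $\beta:\{1,\dots,t\}\to\{1,\dots,s+t\}$ with disjoint images; ${\sf Sh}^1(s,t)$ is the set of those with $\alpha(1)=1$. For $p,q\geq1$, $0\leq i\leq q-1$ and $(\alpha,\beta)\in{\sf Sh}^1(q-i,i)$, let $\tilde\sigma_{\alpha,\beta,p,q}\in S_{p+q}$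 be given by $\tilde\sigma(j)=j$ for $1\leq j\leq p$, $\tilde\sigma(p+j)=p+\beta(i+1-j)$ for $1\leq j\leq i$, $\tilde\sigma(p+i+j)=p+\alpha(j)$ for $1\leq j\leq q-i$; let $\sigma_{\alpha,\beta,p,q}=\tilde\sigma_{\alpha,\beta,p,q}\circ(1,2)^i$. Set $C_{p,q}=\{\sigma_{\alpha,\beta,p,q}\mid 0\leq i\leq q-1,\ (\alpha,\beta)\in{\sf Sh}^1(q-i,i)\}\subseteq S_{p+q}$. Finally $\Phi_{k,l}\in S_{k+l}$ is defined by $\Phi_{k,l}(i)=i+k$ if $i\leq l$ and $\Phi_{k,l}(i)=i-l$ if $i>l$. *)

theory Defs
  imports "HOL-Combinatorics.Combinatorics" "HOL-Library.FuncSet"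
begin

text \<open>Elements of the free associative ring Z<x_1,x_2,...> are represented by their
  coefficient functions on words (lists of variable indices).  Only finitely supported
  elements arise below; equality is equality of coefficient functions.\<close>
type_synonym ncpoly = "nat list \<Rightarrow> int"

definition var :: "nat \<Rightarrow> ncpoly" where
  "var i = (\<lambda>w. if w = [i] then 1 else 0)"

definition nc_mult :: "ncpoly \<Rightarrow> ncpoly \<Rightarrow> ncpoly" where
  "nc_mult p q = (\<lambda>w. \<Sum>i\<le>length w. p (take i w) * q (drop i w))"

definition nc_bracket :: "ncpoly \<Rightarrow> ncpoly \<Rightarrow> ncpoly" where
  "nc_bracket u v = (\<lambda>w. nc_mult u v w - nc_mult v u w)"

fun lbracket :: "ncpoly list \<Rightarrow> ncpoly" where
  "lbracket [] = (\<lambda>w. 0)"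
| "lbracket (u # us) = foldl nc_bracket u us"

definition perm_word :: "nat \<Rightarrow> (nat \<Rightarrow> nat) \<Rightarrow> nat list" where
  "perm_word m \<sigma> = map \<sigma> [1..<m+1]"

definition SumT :: "nat \<Rightarrow> (nat \<Rightarrow> nat) set \<Rightarrow> ncpoly" where
  "SumT m T = (\<lambda>w. \<Sum>\<sigma>\<in>T. if w = perm_word m \<sigma> then 1 else 0)"

definition beta :: "nat \<Rightarrow> ncpoly \<Rightarrow> ncpoly" where
  "beta m p = (\<lambda>w. \<Sum>\<sigma> | \<sigma> permutes {1..m}.
      p (perm_word m \<sigma>) * lbracket (map var (perm_word m \<sigma>)) w)"

definition Sh1 :: "nat \<Rightarrow> nat \<Rightarrow> ((nat \<Rightarrow> nat) \<times> (nat \<Rightarrow> nat)) set" where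
  "Sh1 s t = {(\<alpha>, \<beta>). \<alpha> \<in> {1..s} \<rightarrow>\<^sub>E {1..s+t} \<and> \<beta> \<in> {1..t} \<rightarrow>\<^sub>E {1..s+t}
      \<and> strict_mono_on {1..s} \<alpha> \<and> strict_mono_on {1..t} \<beta>
      \<and> \<alpha> ` {1..s} \<inter> \<beta> ` {1..t} = {} \<and> \<alpha> 1 = 1}"

definition sigma_tilde :: "(nat \<Rightarrow> nat) \<Rightarrow> (nat \<Rightarrow> nat) \<Rightarrow> nat \<Rightarrow> nat \<Rightarrow> nat \<Rightarrow> nat \<Rightarrow> nat" where
  "sigma_tilde \<alpha> \<beta> p q i x =
     (if 1 \<le> x \<and> x \<le> p then x
      else if p < x \<and> x \<le> p + i then p + \<beta> (i + 1 - (x - p))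
      else if p + i < x \<and> x \<le> p + q then p + \<alpha> (x - p - i)
      else x)"

definition sigma_abpq :: "(nat \<Rightarrow> nat) \<Rightarrow> (nat \<Rightarrow> nat) \<Rightarrow> nat \<Rightarrow> nat \<Rightarrow> nat \<Rightarrow> nat \<Rightarrow> nat" where
  "sigma_abpq \<alpha> \<beta> p q i = sigma_tilde \<alpha> \<beta> p q i \<circ> ((Transposition.transpose (1::nat) 2) ^^ i)"

definition C_set :: "nat \<Rightarrow> nat \<Rightarrow> (nat \<Rightarrow> nat) set" where
  "C_set p q = {sigma_abpq \<alpha> \<beta> p q i | i \<alpha> \<beta>. i \<le> q - 1 \<and> (\<alpha>, \<beta>) \<in> Sh1 (q - i) i}"

definition Phi :: "nat \<Rightarrow> nat \<Rightarrow> nat \<Rightarrow> nat" where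
  "Phi k l x = (if 1 \<le> x \<and> x \<le> l then x + k else if l < x \<and> x \<le> k + l then x - l else x)"

end

theory Submission
  imports Defs
begin

text \<open>Iterating the Jacobi identity gives, for every \<open>u\<close>,
  \<open>[u, [x_1, ..., x_k]] = \<Sum>(-1)^|B| [u, x_B, x_C]\<close> over all \<open>B \<subseteq> {2..k}\<close>, where \<open>x_B\<close> lists
  the variables indexed by \<open>B\<close> in decreasing order and \<open>x_C\<close> those indexed by
  \<open>C = {1..k} - B\<close> in increasing order. For \<open>u = [x_(k+1), ..., x_(k+l)]\<close> the sign is
  absorbed by swapping the first two letters of the word \<open>|B|\<close> times, which is exactly the
  effect of the factor \<open>(1,2)^i\<close> in \<open>\<sigma>_(\<alpha>,\<beta>,l,k)\<close>: the permutation
  \<open>\<Phi>_(k,l) \<circ> \<sigma>_(\<alpha>,\<beta>,l,k)\<close> spells this word for \<open>B = \<beta>({1..i})\<close>. Shuffles in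
  \<open>Sh^1(k-i, i)\<close> correspond bijectively to the sets \<open>B \<subseteq> {2..k}\<close> of size \<open>i\<close>
  (\<open>\<beta>\<close> enumerates \<open>B\<close>, \<open>\<alpha>\<close> its complement, which contains 1), so both sides
  are the same sum.\<close>

section \<open>Brackets in the free associative ring\<close>

lemma nc_mult_assoc: "nc_mult (nc_mult p q) r = nc_mult p (nc_mult q r)"
proof (rule ext)
  fix w :: "nat list"
  let ?n = "length w"
  have "nc_mult (nc_mult p q) r w
      = (\<Sum>i\<le>?n. \<Sum>j\<le>i. p (take j w) * q (take (i-j) (drop j w)) * r (drop i w))"
    unfolding nc_mult_def
    by (rule sum.cong[OF refl]) (simp add: sum_distrib_right min_def drop_take mult.assoc)
  also have "\<dots> = (\<Sum>(i,j)\<in>{(i,j). j\<le>i \<and> i\<le>?n}. p (take j w) * q (take (i-j) (drop j w)) * r (drop i w))"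
    by (simp add: sum.Sigma atMost_def) (rule sum.cong, auto)
  also have "\<dots> = (\<Sum>(j,t)\<in>{(j,t). j + t \<le> ?n}. p (take j w) * q (take t (drop j w)) * r (drop (j+t) w))"
    by (rule sum.reindex_bij_witness[where i="\<lambda>(j,t). (j+t,j)" and j="\<lambda>(i,j). (j,i-j)"]) auto
  also have "\<dots> = (\<Sum>j\<le>?n. \<Sum>t\<le>?n-j. p (take j w) * q (take t (drop j w)) * r (drop (j+t) w))"
    by (simp add: sum.Sigma atMost_def) (rule sum.cong, auto)
  also have "\<dots> = nc_mult p (nc_mult q r) w"
    unfolding nc_mult_def
    by (rule sum.cong[OF refl]) (simp add: sum_distrib_left mult.assoc add.commute)
  finally show "nc_mult (nc_mult p q) r w = nc_mult p (nc_mult q r) w" .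
qed

lemma nc_mult_diff_left: "nc_mult (p - q) r = nc_mult p r - nc_mult q r"
  by (simp add: nc_mult_def fun_eq_iff left_diff_distrib sum_subtractf)

lemma nc_mult_diff_right: "nc_mult r (p - q) = nc_mult r p - nc_mult r q"
  by (simp add: nc_mult_def fun_eq_iff right_diff_distrib sum_subtractf)

lemma nc_mult_sum_left:
  "finite S \<Longrightarrow> nc_mult (\<lambda>w. \<Sum>b\<in>S. c b * f b w) r = (\<lambda>w. \<Sum>b\<in>S. c b * nc_mult (f b) r w)"
  by (auto simp: nc_mult_def fun_eq_iff sum_distrib_right sum_distrib_left mult.assoc
      intro: sum.swap)

lemma nc_mult_sum_right:
  "finite S \<Longrightarrow> nc_mult r (\<lambda>w. \<Sum>b\<in>S. c b * f b w) = (\<lambda>w. \<Sum>b\<in>S. c b * nc_mult r (f b) w)"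
  by (auto simp: nc_mult_def fun_eq_iff sum_distrib_left mult.left_commute intro: sum.swap)

lemma nc_bracket_eq_diff: "nc_bracket u v = nc_mult u v - nc_mult v u"
  by (simp add: nc_bracket_def fun_diff_def)

lemma nc_bracket_jacobi:
  "nc_bracket u (nc_bracket v w) = nc_bracket (nc_bracket u v) w - nc_bracket (nc_bracket u w) v"
  unfolding nc_bracket_eq_diff nc_mult_diff_left nc_mult_diff_right nc_mult_assoc
  by (simp add: fun_eq_iff)

lemma nc_bracket_sum_left:
  "finite S \<Longrightarrow> nc_bracket (\<lambda>w. \<Sum>b\<in>S. c b * f b w) r = (\<lambda>w. \<Sum>b\<in>S. c b * nc_bracket (f b) r w)"
  by (simp add: nc_bracket_def nc_mult_sum_left nc_mult_sum_right right_diff_distrib sum_subtractf)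

lemma nc_bracket_antisym: "nc_bracket v u = - nc_bracket u v"
  by (simp add: nc_bracket_def fun_eq_iff)

lemma nc_bracket_uminus_left: "nc_bracket (- u) v = - nc_bracket u v"
  by (simp add: nc_bracket_def nc_mult_def fun_eq_iff sum_negf)

lemma foldl_nc_bracket_uminus: "foldl nc_bracket (- u) vs = - foldl nc_bracket u vs"
  by (induction vs arbitrary: u) (simp_all add: nc_bracket_uminus_left)

lemma lbracket_append: "us \<noteq> [] \<Longrightarrow> lbracket (us @ vs) = foldl nc_bracket (lbracket us) vs"
  by (cases us) auto

definition lbracket_from :: "ncpoly \<Rightarrow> nat list \<Rightarrow> ncpoly" where
  "lbracket_from u zs = foldl nc_bracket u (map var zs)"

lemma lbracket_from_snoc: "lbracket_from u (zs @ [z]) = nc_bracket (lbracket_from u zs) (var z)"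
  by (simp add: lbracket_from_def)

lemma lbracket_from_Cons: "lbracket_from u (z # zs) = lbracket_from (nc_bracket u (var z)) zs"
  by (simp add: lbracket_from_def)

lemma sum_Pow_insert:
  assumes "finite A" and "a \<notin> A"
  shows "(\<Sum>B\<in>Pow (insert a A). f B) = (\<Sum>B\<in>Pow A. f B) + (\<Sum>B\<in>Pow A. f (insert a B))"
proof -
  have "inj_on (insert a) (Pow A)"
    using assms(2) by (intro inj_onI) (metis PowD Diff_insert_absorb in_mono)
  then show ?thesis
    unfolding Pow_insert using assms
    by (subst sum.union_disjoint) (auto simp: sum.reindex)
qed

lemma sorted_list_of_set_insert_greatest:
  fixes A :: "'a::linorder set"
  assumes "finite A" and "\<forall>x\<in>A. x < a"
  shows "sorted_list_of_set (insert a A) = sorted_list_of_set A @ [a]"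
  using assms by (subst sorted_list_of_set_unique[symmetric])
    (auto simp: sorted_wrt_append strict_sorted_iff less_imp_neq)

lemma nc_bracket_lbracket_expansion:
  assumes "n \<ge> 1"
  shows "nc_bracket u (lbracket (map var [1..<n+1]))
       = (\<lambda>w. \<Sum>B\<in>Pow {2..n}. (-1) ^ card B
            * lbracket_from u (rev (sorted_list_of_set B) @ sorted_list_of_set ({1..n} - B)) w)"
  using assms
proof (induction n arbitrary: u rule: nat_induct_at_least)
  case base
  have "{1..1::nat} = {1}" by auto
  then show ?case by (simp add: lbracket_from_def)
next
  case (Suc n)
  define x where "x = Suc n"
  define summand where "summand u B =
    lbracket_from u (rev (sorted_list_of_set B) @ sorted_list_of_set ({1..n} - B))" for u B
  have "lbracket (map var [1..<Suc n + 1]) = nc_bracket (lbracket (map var [1..<n+1])) (var x)"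
    using Suc.hyps lbracket_append[of "map var [1..<n+1]" "[var x]"] by (simp add: x_def)
  then have "nc_bracket u (lbracket (map var [1..<Suc n + 1]))
      = nc_bracket (\<lambda>w. \<Sum>B\<in>Pow {2..n}. (-1) ^ card B * summand u B w) (var x)
        - (\<lambda>w. \<Sum>B\<in>Pow {2..n}. (-1) ^ card B * summand (nc_bracket u (var x)) B w)"
    by (simp only: nc_bracket_jacobi Suc.IH summand_def)
  also have "\<dots> = (\<lambda>w. \<Sum>B\<in>Pow {2..Suc n}. (-1) ^ card B
            * lbracket_from u (rev (sorted_list_of_set B) @ sorted_list_of_set ({1..Suc n} - B)) w)"
  proof -
    have split: "(\<Sum>B\<in>Pow {2..Suc n}. f B) = (\<Sum>B\<in>Pow {2..n}. f B + f (insert x B))"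
      for f :: "nat set \<Rightarrow> int"
      using Suc.hyps sum_Pow_insert[of "{2..n}" x f]
      by (simp add: x_def atLeastAtMostSuc_conv sum.distrib)
    have without_x: "lbracket_from u (rev (sorted_list_of_set B) @ sorted_list_of_set ({1..Suc n} - B))
        = nc_bracket (summand u B) (var x)" if "B \<subseteq> {2..n}" for B
    proof -
      have "{1..Suc n} - B = insert x ({1..n} - B)" using that by (auto simp: x_def)
      then have "sorted_list_of_set ({1..Suc n} - B) = sorted_list_of_set ({1..n} - B) @ [x]"
        by (simp only:) (rule sorted_list_of_set_insert_greatest, auto simp: x_def)
      then show ?thesis by (simp add: summand_def flip: lbracket_from_snoc)
    qed
    have with_x: "card (insert x B) = Suc (card B)"
      "lbracket_from u (rev (sorted_list_of_set (insert x B)) @ sorted_list_of_set ({1..Suc n} - insert x B))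
        = summand (nc_bracket u (var x)) B" if "B \<subseteq> {2..n}" for B
    proof -
      have "finite B" and "x \<notin> B" using that finite_subset[OF that] by (auto simp: x_def)
      then show "card (insert x B) = Suc (card B)" by simp
      have "sorted_list_of_set (insert x B) = sorted_list_of_set B @ [x]"
        using that \<open>finite B\<close> by (intro sorted_list_of_set_insert_greatest) (auto simp: x_def)
      moreover have "{1..Suc n} - insert x B = {1..n} - B" using that by (auto simp: x_def)
      ultimately show "lbracket_from u (rev (sorted_list_of_set (insert x B))
          @ sorted_list_of_set ({1..Suc n} - insert x B)) = summand (nc_bracket u (var x)) B"
        by (simp add: summand_def lbracket_from_Cons)
    qed
    have "(\<lambda>w. \<Sum>B\<in>Pow {2..Suc n}. (-1) ^ card B
            * lbracket_from u (rev (sorted_list_of_set B) @ sorted_list_of_set ({1..Suc n} - B)) w)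
        = (\<lambda>w. \<Sum>B\<in>Pow {2..n}. (-1) ^ card B * nc_bracket (summand u B) (var x) w
            - (-1) ^ card B * summand (nc_bracket u (var x)) B w)"
      unfolding split by (intro ext sum.cong refl) (simp add: without_x with_x del: One_nat_def)
    then show ?thesis by (simp add: nc_bracket_sum_left fun_diff_def sum_subtractf)
  qed
  finally show ?case .
qed

section \<open>Swapping the first two letters\<close>

fun swap_first :: "'a list \<Rightarrow> 'a list" where
  "swap_first (a # b # xs) = b # a # xs"
| "swap_first xs = xs"

lemma length_swap_first [simp]: "length (swap_first xs) = length xs"
  by (cases xs rule: swap_first.cases) auto

lemma set_swap_first [simp]: "set (swap_first xs) = set xs"
  by (cases xs rule: swap_first.cases) auto

lemma distinct_swap_first [simp]: "distinct (swap_first xs) = distinct xs"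
  by (cases xs rule: swap_first.cases) auto

lemma map_swap_first: "map f (swap_first xs) = swap_first (map f xs)"
  by (cases xs rule: swap_first.cases) auto

lemma map_funpow_swap_first: "map f ((swap_first ^^ i) xs) = (swap_first ^^ i) (map f xs)"
  by (induction i) (simp_all add: map_swap_first)

lemma length_funpow_swap_first [simp]: "length ((swap_first ^^ i) xs) = length xs"
  by (induction i) simp_all

lemma set_funpow_swap_first [simp]: "set ((swap_first ^^ i) xs) = set xs"
  by (induction i) simp_all

lemma distinct_funpow_swap_first [simp]: "distinct ((swap_first ^^ i) xs) = distinct xs"
  by (induction i) simp_all

lemma funpow_swap_first_append:
  "2 \<le> length xs \<Longrightarrow> (swap_first ^^ i) (xs @ ys) = (swap_first ^^ i) xs @ ys"
proof (induction i)
  case (Suc i)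
  have "swap_first (zs @ ys) = swap_first zs @ ys" if "2 \<le> length zs" for zs :: "'a list"
    using that by (cases zs rule: swap_first.cases) auto
  with Suc show ?case by simp
qed simp

lemma lbracket_swap_first: "2 \<le> length us \<Longrightarrow> lbracket (swap_first us) = - lbracket us"
proof (cases us rule: swap_first.cases)
  case (1 a b vs)
  then show ?thesis
    using nc_bracket_antisym[of b a] by (simp add: foldl_nc_bracket_uminus)
qed auto

lemma lbracket_funpow_swap_first:
  "2 \<le> length us \<Longrightarrow> lbracket ((swap_first ^^ i) us) = (\<lambda>w. (-1) ^ i * lbracket us w)"
  by (induction i) (simp_all add: lbracket_swap_first fun_eq_iff)

lemma map_transpose_funpow:
  assumes "distinct (a # b # xs)"
  shows "map (Transposition.transpose a b ^^ i) (a # b # xs) = (swap_first ^^ i) (a # b # xs)"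
proof (induction i)
  case (Suc i)
  have "map (Transposition.transpose a b) (a # b # xs) = swap_first (a # b # xs)"
    using assms by (auto simp: Transposition.transpose_def intro: map_idI)
  then have "map (Transposition.transpose a b ^^ Suc i) (a # b # xs)
      = map (Transposition.transpose a b ^^ i) (swap_first (a # b # xs))"
    by (simp only: funpow_Suc_right map_map[symmetric])
  also have "\<dots> = (swap_first ^^ Suc i) (a # b # xs)"
    using Suc by (simp only: map_swap_first funpow.simps comp_apply)
  finally show ?case .
qed simp

section \<open>The words of the expansion\<close>

definition shuffle_word :: "nat \<Rightarrow> nat \<Rightarrow> nat set \<Rightarrow> nat list" where
  "shuffle_word k l B = (swap_first ^^ card B)
     ([k+1..<k+l+1] @ rev (sorted_list_of_set B) @ sorted_list_of_set ({1..k} - B))"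

lemma nc_bracket_lbracket_shuffle_words:
  assumes "k \<ge> 1" and "l \<ge> 1"
  shows "nc_bracket (lbracket (map var [k+1..<k+l+1])) (lbracket (map var [1..<k+1]))
       = (\<lambda>w. \<Sum>B\<in>Pow {2..k}. lbracket (map var (shuffle_word k l B)) w)"
  unfolding nc_bracket_lbracket_expansion[OF assms(1)]
proof (intro ext sum.cong refl)
  fix w B assume "B \<in> Pow {2..k}"
  define ys where "ys = [k+1..<k+l+1]"
  define zs where "zs = rev (sorted_list_of_set B) @ sorted_list_of_set ({1..k} - B)"
  have "1 \<in> {1..k} - B" using \<open>B \<in> Pow {2..k}\<close> assms(1) by auto
  then have "zs \<noteq> []" by (auto simp: zs_def)
  then have "2 \<le> length (ys @ zs)"
    using assms(2) by (cases zs) (auto simp: ys_def)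
  moreover have "lbracket_from (lbracket (map var ys)) zs = lbracket (map var (ys @ zs))"
    using assms(2) lbracket_append[of "map var ys" "map var zs"]
    by (simp add: lbracket_from_def ys_def del: upt_Suc)
  ultimately show "(-1) ^ card B * lbracket_from (lbracket (map var ys)) zs w
      = lbracket (map var (shuffle_word k l B)) w"
    by (simp add: shuffle_word_def lbracket_funpow_swap_first map_funpow_swap_first
        ys_def zs_def del: upt_Suc)
qed

lemma distinct_shuffle_word: "B \<subseteq> {1..k} \<Longrightarrow> distinct (shuffle_word k l B)"
  using finite_subset[of B "{1..k}"] by (auto simp: shuffle_word_def)

lemma set_shuffle_word: "B \<subseteq> {1..k} \<Longrightarrow> set (shuffle_word k l B) = {1..k+l}"
  using finite_subset[of B "{1..k}"] by (auto simp: shuffle_word_def)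

lemma takeWhile_shuffle_word:
  assumes "B \<subseteq> {2..k}" and "k \<ge> 1" and "l \<ge> 1"
  shows "set (takeWhile (\<lambda>x. x \<noteq> 1) (shuffle_word k l B)) \<inter> {1..k} = B"
proof -
  define pre where "pre = [k+1..<k+l+1] @ rev (sorted_list_of_set B)"
  define C where "C = {1..k} - B"
  have "finite B" using assms(1) finite_subset by blast
  have "1 \<in> C" and "finite C" using assms by (auto simp: C_def)
  moreover have "Min C = 1" using \<open>1 \<in> C\<close> \<open>finite C\<close> by (intro Min_eqI) (auto simp: C_def)
  ultimately have sorted_C: "sorted_list_of_set C = 1 # sorted_list_of_set (C - {1})"
    using sorted_list_of_set_nonempty[OF \<open>finite C\<close>] by auto
  have swap_pre: "(swap_first ^^ card B) (pre @ ys) = (swap_first ^^ card B) pre @ ys" for ys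
  proof (cases "card B = 0")
    case False
    then have "2 \<le> length pre" using assms(3) by (simp add: pre_def)
    then show ?thesis by (rule funpow_swap_first_append)
  qed simp
  have "shuffle_word k l B = (swap_first ^^ card B) (pre @ sorted_list_of_set C)"
    by (simp only: shuffle_word_def pre_def C_def append_assoc)
  also have "\<dots> = (swap_first ^^ card B) pre @ 1 # sorted_list_of_set (C - {1})"
    by (simp only: sorted_C swap_pre)
  finally have "shuffle_word k l B = (swap_first ^^ card B) pre @ 1 # sorted_list_of_set (C - {1})" .
  moreover have "1 \<notin> set pre" and "set pre \<inter> {1..k} = B"
    using assms(1,2) \<open>finite B\<close> by (auto simp: pre_def)
  moreover from this have "takeWhile (\<lambda>x. x \<noteq> 1) ((swap_first ^^ card B) pre @ 1 # ys)
      = (swap_first ^^ card B) pre" for ys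
    by (subst takeWhile_append2) auto
  ultimately show ?thesis by simp
qed

lemma inj_on_shuffle_word:
  assumes "k \<ge> 1" and "l \<ge> 1"
  shows "inj_on (shuffle_word k l) (Pow {2..k})"
  by (rule inj_onI) (metis PowD takeWhile_shuffle_word assms)

section \<open>Shuffles\<close>

lemma sorted_list_of_set_image_strict_mono:
  fixes f :: "nat \<Rightarrow> 'a::linorder"
  assumes "strict_mono_on {1..n} f"
  shows "sorted_list_of_set (f ` {1..n}) = map f [1..<n+1]"
proof (subst sorted_list_of_set_unique[symmetric])
  have "inj_on f {1..n}" using assms by (rule strict_mono_on_imp_inj_on)
  moreover have "sorted_wrt (<) (map f [1..<n+1])"
    unfolding sorted_wrt_map
    by (rule sorted_wrt_mono_rel[OF _ sorted_wrt_upt]) (use assms in \<open>auto simp: strict_mono_on_def\<close>)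
  ultimately show "sorted_wrt (<) (map f [1..<n+1]) \<and> set (map f [1..<n+1]) = f ` {1..n}
      \<and> length (map f [1..<n+1]) = card (f ` {1..n})"
    by (auto simp: card_image atLeastLessThanSuc_atLeastAtMost)
qed simp

lemma Sh1D:
  assumes "(\<alpha>, \<beta>) \<in> Sh1 s t"
  shows "\<alpha> ` {1..s} \<subseteq> {1..s+t}" and "\<beta> ` {1..t} \<subseteq> {1..s+t}"
    and "strict_mono_on {1..s} \<alpha>" and "strict_mono_on {1..t} \<beta>"
    and "\<alpha> ` {1..s} \<inter> \<beta> ` {1..t} = {}" and "\<alpha> 1 = 1"
  using assms unfolding Sh1_def by (auto simp: PiE_def Pi_def)

lemma Sh1I:
  assumes "\<alpha> \<in> {1..s} \<rightarrow>\<^sub>E {1..s+t}" and "\<beta> \<in> {1..t} \<rightarrow>\<^sub>E {1..s+t}"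
    and "strict_mono_on {1..s} \<alpha>" and "strict_mono_on {1..t} \<beta>"
    and "\<alpha> ` {1..s} \<inter> \<beta> ` {1..t} = {}" and "\<alpha> 1 = 1"
  shows "(\<alpha>, \<beta>) \<in> Sh1 s t"
  using assms unfolding Sh1_def by blast

lemma Sh1_images:
  assumes "(\<alpha>, \<beta>) \<in> Sh1 s t"
  shows "\<alpha> ` {1..s} = {1..s+t} - \<beta> ` {1..t}" and "card (\<beta> ` {1..t}) = t"
proof -
  note Sh = Sh1D[OF assms]
  have inj: "inj_on \<alpha> {1..s}" "inj_on \<beta> {1..t}"
    using Sh(3,4) by (auto intro: strict_mono_on_imp_inj_on)
  then show "card (\<beta> ` {1..t}) = t" by (simp add: card_image)
  have "card (\<alpha> ` {1..s} \<union> \<beta> ` {1..t}) = s + t"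
    using Sh(5) inj by (simp add: card_Un_disjoint card_image)
  then have "\<alpha> ` {1..s} \<union> \<beta> ` {1..t} = {1..s+t}"
    using Sh(1,2) by (intro card_subset_eq) auto
  then show "\<alpha> ` {1..s} = {1..s+t} - \<beta> ` {1..t}"
    using Sh(5) by blast
qed

lemma Sh1_image_subset:
  assumes "(\<alpha>, \<beta>) \<in> Sh1 s t" and "s \<ge> 1"
  shows "\<beta> ` {1..t} \<subseteq> {2..s+t}"
proof
  fix y assume y: "y \<in> \<beta> ` {1..t}"
  note Sh = Sh1D[OF assms(1)]
  have "1 \<in> \<alpha> ` {1..s}" using Sh(6) assms(2) by (metis atLeastAtMost_iff image_eqI order_refl)
  then have "y \<noteq> 1" using Sh(5) y by blast
  moreover have "y \<in> {1..s+t}" using Sh(2) y by blast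
  ultimately show "y \<in> {2..s+t}" by simp
qed

definition sorted_enum :: "nat set \<Rightarrow> nat \<Rightarrow> nat" where
  "sorted_enum A = (\<lambda>j\<in>{1..card A}. sorted_list_of_set A ! (j - 1))"

lemma sorted_enum:
  assumes "finite A"
  shows "sorted_enum A \<in> {1..card A} \<rightarrow>\<^sub>E A" and "sorted_enum A ` {1..card A} = A"
    and "strict_mono_on {1..card A} (sorted_enum A)"
proof -
  let ?xs = "sorted_list_of_set A"
  have "(\<lambda>j. ?xs ! (j - 1)) ` {1..card A} = set ?xs"
  proof
    show "set ?xs \<subseteq> (\<lambda>j. ?xs ! (j - 1)) ` {1..card A}"
    proof
      fix y assume "y \<in> set ?xs"
      then obtain t where "t < card A" "?xs ! t = y" by (metis in_set_conv_nth length_sorted_list_of_set)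
      then show "y \<in> (\<lambda>j. ?xs ! (j - 1)) ` {1..card A}" by (intro image_eqI[where x = "Suc t"]) auto
    qed
  qed auto
  then show "sorted_enum A ` {1..card A} = A" using assms by (simp add: sorted_enum_def)
  then show "sorted_enum A \<in> {1..card A} \<rightarrow>\<^sub>E A" by (auto simp: sorted_enum_def)
  show "strict_mono_on {1..card A} (sorted_enum A)"
  proof (rule strict_mono_onI)
    fix r s assume "r \<in> {1..card A}" "s \<in> {1..card A}" "r < s"
    moreover from this have "?xs ! (r - 1) < ?xs ! (s - 1)"
      by (intro sorted_wrt_nth_less[OF strict_sorted_list_of_set]) auto
    ultimately show "sorted_enum A r < sorted_enum A s" by (simp add: sorted_enum_def)
  qed
qed

lemma sorted_enum_1:
  assumes "finite A" and "1 \<in> A" and "\<forall>x\<in>A. x \<ge> 1"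
  shows "sorted_enum A 1 = 1"
proof -
  have "A \<noteq> {}" and "Min A = 1" using assms by (auto intro: Min_eqI)
  then have "sorted_list_of_set A ! 0 = 1" using sorted_list_of_set_nonempty[OF assms(1)] by simp
  moreover have "card A \<ge> 1" using assms by (auto simp: Suc_le_eq card_gt_0_iff)
  ultimately show ?thesis by (simp add: sorted_enum_def)
qed

lemma Sh1_sorted_enum:
  assumes "B \<subseteq> {2..k}" and "k \<ge> 1"
  shows "(sorted_enum ({1..k} - B), sorted_enum B) \<in> Sh1 (k - card B) (card B)"
proof -
  let ?C = "{1..k} - B"
  have "finite B" using assms(1) finite_subset by blast
  have card_C: "card ?C = k - card B" using assms(1) by (subst card_Diff_subset) (auto intro: finite_subset)
  have "B \<subseteq> {1..k}" using assms(1) by auto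
  then have "card B \<le> k" using card_mono[of "{1..k}" B] by simp
  then have k_eq: "k - card B + card B = k" by simp
  have "finite ?C" by simp
  note enum_B = sorted_enum[OF \<open>finite B\<close>] and enum_C = sorted_enum[OF \<open>finite ?C\<close>, unfolded card_C]
  show ?thesis
  proof (rule Sh1I, unfold k_eq)
    show "sorted_enum ?C \<in> {1..k - card B} \<rightarrow>\<^sub>E {1..k}"
      by (rule subsetD[OF PiE_mono enum_C(1)]) auto
    show "sorted_enum B \<in> {1..card B} \<rightarrow>\<^sub>E {1..k}"
      by (rule subsetD[OF PiE_mono enum_B(1)]) (use \<open>B \<subseteq> {1..k}\<close> in auto)
    show "sorted_enum ?C ` {1..k - card B} \<inter> sorted_enum B ` {1..card B} = {}"
      unfolding enum_B(2) enum_C(2) by blast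
    show "sorted_enum ?C 1 = 1" using assms by (intro sorted_enum_1) auto
    show "strict_mono_on {1..k - card B} (sorted_enum ?C)" by (rule enum_C(3))
    show "strict_mono_on {1..card B} (sorted_enum B)" by (rule enum_B(3))
  qed
qed

section \<open>The permutations of the right-hand side\<close>

lemma map_Phi_sigma_tilde:
  assumes "i \<le> k" and "\<alpha> ` {1..k-i} \<subseteq> {1..k}" and "\<beta> ` {1..i} \<subseteq> {1..k}"
  shows "map (Phi k l \<circ> sigma_tilde \<alpha> \<beta> l k i) [1..<k+l+1]
       = [k+1..<k+l+1] @ rev (map \<beta> [1..<i+1]) @ map \<alpha> [1..<k-i+1]"
proof -
  let ?F = "Phi k l \<circ> sigma_tilde \<alpha> \<beta> l k i"
  have split: "[a..<c] = [a..<b] @ [b..<c]" if "a \<le> b" "b \<le> c" for a b c :: nat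
    using upt_add_eq_append[of a b "c - b"] that by simp
  have "[1..<k+l+1] = [1..<l+1] @ [l+1..<l+i+1] @ [l+i+1..<l+k+1]"
    using assms(1) split[of 1 "l+1" "k+l+1"] split[of "l+1" "l+i+1" "l+k+1"]
    by (simp add: add.commute del: upt_Suc)
  moreover have "map ?F [1..<l+1] = [k+1..<k+l+1]"
    by (rule nth_equalityI) (auto simp: sigma_tilde_def Phi_def simp del: upt_Suc)
  moreover have "map ?F [l+1..<l+i+1] = rev (map \<beta> [1..<i+1])"
  proof (rule nth_equalityI)
    fix j assume "j < length (map ?F [l+1..<l+i+1])"
    then have j: "j < i" by (simp del: upt_Suc)
    then have "\<beta> (i - j) \<in> {1..k}" and "Suc (i - Suc j) = i - j"
      using assms(3) by (auto simp: image_subset_iff)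
    then show "map ?F [l+1..<l+i+1] ! j = rev (map \<beta> [1..<i+1]) ! j"
      using j by (simp add: sigma_tilde_def Phi_def rev_nth del: upt_Suc)
  qed (simp del: upt_Suc)
  moreover have "map ?F [l+i+1..<l+k+1] = map \<alpha> [1..<k-i+1]"
  proof (rule nth_equalityI)
    fix j assume "j < length (map ?F [l+i+1..<l+k+1])"
    then have j: "j < k - i" by (simp del: upt_Suc)
    then have "\<alpha> (Suc j) \<in> {1..k}" using assms(2) by (auto simp: image_subset_iff)
    then show "map ?F [l+i+1..<l+k+1] ! j = map \<alpha> [1..<k-i+1] ! j"
      using j assms(1) by (simp add: sigma_tilde_def Phi_def del: upt_Suc)
  qed (use assms(1) in \<open>simp del: upt_Suc\<close>)
  ultimately show ?thesis by (simp del: upt_Suc)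
qed

lemma perm_word_Phi_sigma_abpq:
  assumes "k \<ge> 1" and "l \<ge> 1" and "i \<le> k - 1" and Sh: "(\<alpha>, \<beta>) \<in> Sh1 (k - i) i"
  shows "perm_word (k+l) (Phi k l \<circ> sigma_abpq \<alpha> \<beta> l k i) = shuffle_word k l (\<beta> ` {1..i})"
proof -
  let ?B = "\<beta> ` {1..i}" and ?ns = "[1..<k+l+1]"
  have ki: "k - i + i = k" using assms(1,3) by simp
  have \<alpha>_img: "\<alpha> ` {1..k-i} = {1..k} - ?B" and card_B: "card ?B = i"
    using Sh1_images[OF Sh] ki by simp_all
  have map_\<alpha>: "map \<alpha> [1..<k-i+1] = sorted_list_of_set ({1..k} - ?B)"
    unfolding \<alpha>_img[symmetric] by (rule sorted_list_of_set_image_strict_mono[symmetric, OF Sh1D(3)[OF Sh]])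
  have map_\<beta>: "map \<beta> [1..<i+1] = sorted_list_of_set ?B"
    by (rule sorted_list_of_set_image_strict_mono[symmetric, OF Sh1D(4)[OF Sh]])
  have map_\<sigma>: "map (Phi k l \<circ> sigma_tilde \<alpha> \<beta> l k i) ?ns
      = [k+1..<k+l+1] @ rev (map \<beta> [1..<i+1]) @ map \<alpha> [1..<k-i+1]"
  proof (rule map_Phi_sigma_tilde)
    show "\<alpha> ` {1..k-i} \<subseteq> {1..k}" and "\<beta> ` {1..i} \<subseteq> {1..k}"
      using Sh1D(1,2)[OF Sh] unfolding ki by auto
  qed (use assms(3) in linarith)
  have map_transpose: "map (Transposition.transpose 1 2 ^^ i) ?ns = (swap_first ^^ i) ?ns"
  proof -
    have "?ns = 1 # 2 # [3..<k+l+1]" using assms(1,2) by (simp add: upt_conv_Cons eval_nat_numeral del: upt_Suc)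
    then show ?thesis using map_transpose_funpow[of 1 2 "[3..<k+l+1]" i] by simp
  qed
  have "perm_word (k+l) (Phi k l \<circ> sigma_abpq \<alpha> \<beta> l k i)
      = map (Phi k l \<circ> sigma_tilde \<alpha> \<beta> l k i) (map (Transposition.transpose 1 2 ^^ i) ?ns)"
    by (simp only: perm_word_def sigma_abpq_def map_map comp_assoc)
  also have "\<dots> = (swap_first ^^ i) (map (Phi k l \<circ> sigma_tilde \<alpha> \<beta> l k i) ?ns)"
    by (simp only: map_transpose map_funpow_swap_first)
  also have "\<dots> = shuffle_word k l ?B"
    by (simp only: shuffle_word_def card_B map_\<sigma> map_\<alpha> map_\<beta>)
  finally show ?thesis .
qed

lemma Phi_sigma_abpq_fixes:
  assumes "x \<notin> {1..k+l}" and "i \<le> k" and "k \<ge> 1" and "l \<ge> 1"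
  shows "(Phi k l \<circ> sigma_abpq \<alpha> \<beta> l k i) x = x"
proof -
  have "x \<noteq> 1" and "x \<noteq> 2" and "x = 0 \<or> x > k + l" using assms by auto
  then have "(Transposition.transpose 1 2 ^^ i) x = x"
    by (induction i) (simp_all add: Transposition.transpose_def)
  moreover have "sigma_tilde \<alpha> \<beta> l k i x = x" and "Phi k l x = x"
    using \<open>x = 0 \<or> x > k + l\<close> assms(2) by (auto simp: sigma_tilde_def Phi_def)
  ultimately show ?thesis by (simp add: sigma_abpq_def)
qed

lemma permutes_if_perm_word:
  assumes "\<And>x. x \<notin> {1..m} \<Longrightarrow> \<sigma> x = x"
    and "distinct (perm_word m \<sigma>)" and "set (perm_word m \<sigma>) = {1..m}"
  shows "\<sigma> permutes {1..m}"
proof (rule bij_imp_permutes)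
  have "set [1..<m+1] = {1..m}" by auto
  then show "bij_betw \<sigma> {1..m} {1..m}"
    using assms(2,3) by (simp add: bij_betw_def perm_word_def distinct_map)
qed (use assms(1) in auto)

lemma inj_on_perm_word: "inj_on (perm_word m) {\<sigma>. \<sigma> permutes {1..m}}"
proof (rule inj_onI, rule ext)
  fix \<sigma> \<tau> x assume \<sigma>: "\<sigma> \<in> {\<sigma>. \<sigma> permutes {1..m}}" and \<tau>: "\<tau> \<in> {\<sigma>. \<sigma> permutes {1..m}}"
    and eq: "perm_word m \<sigma> = perm_word m \<tau>"
  show "\<sigma> x = \<tau> x"
  proof (cases "x \<in> {1..m}")
    case True
    then have "x \<in> set [1..<m+1]" by auto
    then show ?thesis using eq unfolding perm_word_def by (metis map_eq_conv)
  next
    case False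
    then show ?thesis using \<sigma> \<tau> by (simp add: permutes_not_in)
  qed
qed

lemma beta_SumT:
  assumes "T \<subseteq> {\<sigma>. \<sigma> permutes {1..m}}"
  shows "beta m (SumT m T) = (\<lambda>w. \<Sum>\<sigma>\<in>T. lbracket (map var (perm_word m \<sigma>)) w)"
proof
  fix w
  let ?P = "{\<sigma>. \<sigma> permutes {1..m}}"
  have "finite ?P" by (rule finite_permutations) simp
  then have "finite T" using assms by (rule finite_subset[rotated])
  have SumT_perm_word: "SumT m T (perm_word m \<sigma>) = (if \<sigma> \<in> T then 1 else 0)" if "\<sigma> \<in> ?P" for \<sigma>
  proof -
    have "SumT m T (perm_word m \<sigma>) = (\<Sum>\<tau>\<in>T. if \<sigma> = \<tau> then 1 else 0)"
      unfolding SumT_def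
    proof (rule sum.cong[OF refl])
      fix \<tau> assume "\<tau> \<in> T"
      then have "\<tau> permutes {1..m}" using assms by blast
      then show "(if perm_word m \<sigma> = perm_word m \<tau> then 1 else 0) = (if \<sigma> = \<tau> then 1 else (0::int))"
        using inj_onD[OF inj_on_perm_word[of m], of \<sigma> \<tau>] that by auto
    qed
    also have "\<dots> = (if \<sigma> \<in> T then 1 else 0)" using \<open>finite T\<close> by simp
    finally show ?thesis .
  qed
  have "beta m (SumT m T) w = (\<Sum>\<sigma>\<in>?P. if \<sigma> \<in> T then lbracket (map var (perm_word m \<sigma>)) w else 0)"
    unfolding beta_def by (rule sum.cong) (auto simp: SumT_perm_word)
  also have "\<dots> = (\<Sum>\<sigma>\<in>T. lbracket (map var (perm_word m \<sigma>)) w)"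
    using \<open>finite ?P\<close> assms by (simp add: sum.If_cases Int_absorb1)
  finally show "beta m (SumT m T) w = (\<Sum>\<sigma>\<in>T. lbracket (map var (perm_word m \<sigma>)) w)" .
qed

lemma Phi_C_set_permutes:
  assumes "k \<ge> 1" and "l \<ge> 1" and "\<sigma> \<in> (\<lambda>\<tau>. Phi k l \<circ> \<tau>) ` C_set l k"
  shows "\<sigma> permutes {1..k+l}"
proof -
  obtain i \<alpha> \<beta> where \<sigma>: "\<sigma> = Phi k l \<circ> sigma_abpq \<alpha> \<beta> l k i"
    and i: "i \<le> k - 1" and Sh: "(\<alpha>, \<beta>) \<in> Sh1 (k - i) i"
    using assms(3) by (auto simp: C_set_def)
  have "\<beta> ` {1..i} \<subseteq> {2..k}" using Sh1_image_subset[OF Sh] assms(1) i by simp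
  moreover have "{2..k} \<subseteq> {1..k}" by auto
  ultimately have B: "\<beta> ` {1..i} \<subseteq> {1..k}" by (rule subset_trans)
  show ?thesis
  proof (rule permutes_if_perm_word)
    show "x \<notin> {1..k+l} \<Longrightarrow> \<sigma> x = x" for x
      using Phi_sigma_abpq_fixes assms(1,2) i by (simp add: \<sigma>)
    show "distinct (perm_word (k+l) \<sigma>)" and "set (perm_word (k+l) \<sigma>) = {1..k+l}"
      using distinct_shuffle_word[OF B] set_shuffle_word[OF B] perm_word_Phi_sigma_abpq[OF assms(1,2) i Sh] by (simp_all add: \<sigma>)
  qed
qed

lemma perm_word_Phi_C_set:
  assumes "k \<ge> 1" and "l \<ge> 1"
  shows "perm_word (k+l) ` (\<lambda>\<tau>. Phi k l \<circ> \<tau>) ` C_set l k = shuffle_word k l ` Pow {2..k}"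
proof
  show "perm_word (k+l) ` (\<lambda>\<tau>. Phi k l \<circ> \<tau>) ` C_set l k \<subseteq> shuffle_word k l ` Pow {2..k}"
  proof clarify
    fix \<sigma> assume "\<sigma> \<in> C_set l k"
    then obtain i \<alpha> \<beta> where \<sigma>: "\<sigma> = sigma_abpq \<alpha> \<beta> l k i"
      and i: "i \<le> k - 1" and Sh: "(\<alpha>, \<beta>) \<in> Sh1 (k - i) i"
      by (auto simp: C_set_def)
    have "\<beta> ` {1..i} \<in> Pow {2..k}" using Sh1_image_subset[OF Sh] assms(1) i by simp
    then show "perm_word (k+l) (Phi k l \<circ> \<sigma>) \<in> shuffle_word k l ` Pow {2..k}"
      using perm_word_Phi_sigma_abpq[OF assms i Sh] \<sigma> by simp
  qed
  show "shuffle_word k l ` Pow {2..k} \<subseteq> perm_word (k+l) ` (\<lambda>\<tau>. Phi k l \<circ> \<tau>) ` C_set l k"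
  proof clarify
    fix B assume B: "B \<subseteq> {2..k}"
    define \<alpha> where "\<alpha> = sorted_enum ({1..k} - B)"
    define \<beta> where "\<beta> = sorted_enum B"
    have Sh: "(\<alpha>, \<beta>) \<in> Sh1 (k - card B) (card B)"
      unfolding \<alpha>_def \<beta>_def using B assms(1) by (rule Sh1_sorted_enum)
    have "card B \<le> card {2..k}" using B by (rule card_mono[rotated]) simp
    then have i: "card B \<le> k - 1" by simp
    have "finite B" by (rule finite_subset[OF B]) simp
    then have "\<beta> ` {1..card B} = B" unfolding \<beta>_def by (rule sorted_enum(2))
    then have "shuffle_word k l B = perm_word (k+l) (Phi k l \<circ> sigma_abpq \<alpha> \<beta> l k (card B))"
      using perm_word_Phi_sigma_abpq[OF assms i Sh] by simp
    moreover have "sigma_abpq \<alpha> \<beta> l k (card B) \<in> C_set l k"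
      using i Sh by (auto simp: C_set_def)
    ultimately show "shuffle_word k l B \<in> perm_word (k+l) ` (\<lambda>\<tau>. Phi k l \<circ> \<tau>) ` C_set l k"
      by blast
  qed
qed

theorem corollary1:
  fixes k l :: nat
  assumes "k \<ge> 1" and "l \<ge> 1"
  shows "nc_bracket (lbracket (map var [k+1..<k+l+1])) (lbracket (map var [1..<k+1]))
       = beta (k + l) (SumT (k + l) ((\<lambda>\<tau>. Phi k l \<circ> \<tau>) ` C_set l k))"
proof -
  let ?T = "(\<lambda>\<tau>. Phi k l \<circ> \<tau>) ` C_set l k"
  have perms: "?T \<subseteq> {\<sigma>. \<sigma> permutes {1..k+l}}"
    using Phi_C_set_permutes[OF assms] by blast
  have inj: "inj_on (perm_word (k+l)) ?T"
    by (rule inj_on_subset[OF inj_on_perm_word perms])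
  have "beta (k+l) (SumT (k+l) ?T) = (\<lambda>w. \<Sum>\<sigma>\<in>?T. lbracket (map var (perm_word (k+l) \<sigma>)) w)"
    by (rule beta_SumT[OF perms])
  also have "\<dots> = (\<lambda>w. \<Sum>ws\<in>perm_word (k+l) ` ?T. lbracket (map var ws) w)"
    by (intro ext sum.reindex_cong[OF inj refl, symmetric]) (rule refl)
  also have "\<dots> = (\<lambda>w. \<Sum>B\<in>Pow {2..k}. lbracket (map var (shuffle_word k l B)) w)"
    unfolding perm_word_Phi_C_set[OF assms]
    by (intro ext sum.reindex_cong[OF inj_on_shuffle_word[OF assms] refl]) (rule refl)
  also have "\<dots> = nc_bracket (lbracket (map var [k+1..<k+l+1])) (lbracket (map var [1..<k+1]))"
    by (rule nc_bracket_lbracket_shuffle_words[OF assms, symmetric])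
  finally show ?thesis ..
qed

end
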